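(* Let $\mathcal{R}=(G_0,e\to R)$ be an expanding replacement system with limit space $X$. Then the set of all rearrangements of $X$ is a group under composition.
   Context: A graph means a finite directed multigraph (loops and multiple edges allowed). A replacement system $\mathcal{R}=(G_0,e\to R)$ consists of a graph $G_0$ (the base graph) and a replacement rule $e\to R$, where $e$ is a single non-loop directed edge from a vertex $v$ to a vertex $w$, and $R$ is a graph containing $v$ and $w$ (the initial and terminal vertices of $R$; the other vertices of $R$ are interior). Replacing an edge $\varepsilon$ of a graph $G$ means deleting $\varepsilon$ and gluing in a copy of $R$, identifying the initial (resp. terminal) vertex of $R$ with the initial (resp. terminal) vertex of $\varepsilon$; the new edges are named $\varepsilon\zeta$ for edges $\zeta$ of $R$. The full expansion sequence is $G_0,G_1,\dots$, where $G_n$ is obtained from $G_{n-1}$ by replacing every edge; thus the edges of $G_n$ are the words $\varepsilon_0\varepsilon_1\cdots\varepsilon_n$ with $\varepsilon_0$ an edge of $G_0$ and $\varepsilon_i$ edges of $R$. $\mathcal{R}$ is expanding if (i) neither $G_0$ nor $R$ has isolated vertices, (ii) the initial and terminal vertices of $R$ are not joined by an edge, (iii) $R$ has at least three vertices and two edges. The symbol space is $\Omega=E(G_0)\times E(R)^{\mathbb{N}}$ with the product topology; two sequences $\varepsilon_0\varepsilon_1\cdots$ and $\varepsilon_0'\varepsilon_1'\cdots$ are glued if for every $n$ the edges $\varepsilon_0\cdots\varepsilon_n$ and $\varepsilon_0'\cdots\varepsilon_n'$ of $G_n$ share at least one vertex; for expanding systems this is an equivalence relation $\sim$ and the limit space is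 $X=\Omega/\sim$. For an edge $e'=\varepsilon_0\cdots\varepsilon_n$ of $G_n$, the cell $C(e')$ is the image in $X$ of the set of sequences with prefix $e'$; its boundary points are the images of the endpoints of $e'$ (a vertex $u$ of some $G_n$ corresponds to the point of $X$ that is the image of any sequence $\varepsilon_0\varepsilon_1\cdots$ such that $\varepsilon_0\cdots\varepsilon_k$ is incident on $u$ for all large $k$), and its interior is the cell minus its boundary points. If $e',e''$ are both loops or both non-loops, the canonical homeomorphism $C(e')\to C(e'')$ is the map induced by $e'\zeta_1\zeta_2\cdots\mapsto e''\zeta_1\zeta_2\cdots$. A cellular partition of $X$ is a cover of $X$ by finitely many cells with pairwise disjoint interiors. A rearrangement of $X$ is a homeomorphism $f\colon X\to X$ such that for some cellular partition $\mathcal{P}$, $f$ restricts to a canonical homeomorphism on each cell of $\mathcal{P}$. *)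

theory Defs
  imports "HOL-Analysis.Analysis" "HOL-Algebra.Group" "Graph_Theory.Digraph"
begin

text \<open>A replacement system is given by a base graph G0 (vertices 'a, arcs 'b),
  a replacement graph R (vertices 'c, arcs 'd) and its initial vertex v and
  terminal vertex w (the endpoints of the replaced non-loop edge e).\<close>

definition repl_sys :: "('a,'b) pre_digraph \<Rightarrow> ('c,'d) pre_digraph \<Rightarrow> 'c \<Rightarrow> 'c \<Rightarrow> bool" where
  "repl_sys G0 R v w \<longleftrightarrow> fin_digraph G0 \<and> fin_digraph R \<and> v \<in> verts R \<and> w \<in> verts R \<and> v \<noteq> w"

definition no_isolated :: "('x,'y) pre_digraph \<Rightarrow> bool" where
  "no_isolated G \<longleftrightarrow> (\<forall>u\<in>verts G. \<exists>a\<in>arcs G. tail G a = u \<or> head G a = u)"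

definition expanding :: "('a,'b) pre_digraph \<Rightarrow> ('c,'d) pre_digraph \<Rightarrow> 'c \<Rightarrow> 'c \<Rightarrow> bool" where
  "expanding G0 R v w \<longleftrightarrow> repl_sys G0 R v w \<and> no_isolated G0 \<and> no_isolated R \<and>
     \<not> (\<exists>a\<in>arcs R. (tail R a = v \<and> head R a = w) \<or> (tail R a = w \<and> head R a = v)) \<and>
     card (verts R) \<ge> 3 \<and> card (arcs R) \<ge> 2"

text \<open>An edge of G_n is a word (b, [d_1,...,d_n]) with b an arc of G0 and d_i arcs of R.
  A vertex of some G_n is either Inl a for a vertex a of G0, or Inr (x, c) where
  c is an interior vertex of R glued in when replacing the edge x.\<close>

type_synonym ('b,'d) eword = "'b \<times> 'd list"
type_synonym ('a,'b,'c,'d) evert = "'a + ('b,'d) eword \<times> 'c"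

definition edge_word :: "('a,'b) pre_digraph \<Rightarrow> ('c,'d) pre_digraph \<Rightarrow> nat \<Rightarrow> ('b,'d) eword \<Rightarrow> bool" where
  "edge_word G0 R n x \<longleftrightarrow> fst x \<in> arcs G0 \<and> length (snd x) = n \<and> set (snd x) \<subseteq> arcs R"

fun ends_rev :: "('a,'b) pre_digraph \<Rightarrow> ('c,'d) pre_digraph \<Rightarrow> 'c \<Rightarrow> 'c \<Rightarrow> 'b \<Rightarrow> 'd list
     \<Rightarrow> ('a,'b,'c,'d) evert \<times> ('a,'b,'c,'d) evert" where
  "ends_rev G0 R v w b [] = (Inl (tail G0 b), Inl (head G0 b))"
| "ends_rev G0 R v w b (z # rds) =
     (let (s, t) = ends_rev G0 R v w b rds;
          conv = (\<lambda>c. if c = v then s else if c = w then t else Inr ((b, rev rds), c))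
      in (conv (tail R z), conv (head R z)))"

definition ends :: "('a,'b) pre_digraph \<Rightarrow> ('c,'d) pre_digraph \<Rightarrow> 'c \<Rightarrow> 'c \<Rightarrow> ('b,'d) eword
     \<Rightarrow> ('a,'b,'c,'d) evert \<times> ('a,'b,'c,'d) evert" where
  "ends G0 R v w x = ends_rev G0 R v w (fst x) (rev (snd x))"

definition incident :: "('a,'b) pre_digraph \<Rightarrow> ('c,'d) pre_digraph \<Rightarrow> 'c \<Rightarrow> 'c \<Rightarrow> ('b,'d) eword
     \<Rightarrow> ('a,'b,'c,'d) evert \<Rightarrow> bool" where
  "incident G0 R v w x u \<longleftrightarrow> u = fst (ends G0 R v w x) \<or> u = snd (ends G0 R v w x)"

definition is_loop_word :: "('a,'b) pre_digraph \<Rightarrow> ('c,'d) pre_digraph \<Rightarrow> 'c \<Rightarrow> 'c \<Rightarrow> ('b,'d) eword \<Rightarrow> bool" where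
  "is_loop_word G0 R v w x \<longleftrightarrow> fst (ends G0 R v w x) = snd (ends G0 R v w x)"

definition symbol_top :: "('a,'b) pre_digraph \<Rightarrow> ('c,'d) pre_digraph \<Rightarrow> ('b \<times> (nat \<Rightarrow> 'd)) topology" where
  "symbol_top G0 R = prod_topology (discrete_topology (arcs G0))
                        (product_topology (\<lambda>_. discrete_topology (arcs R)) UNIV)"

definition prefix_word :: "nat \<Rightarrow> 'b \<times> (nat \<Rightarrow> 'd) \<Rightarrow> ('b,'d) eword" where
  "prefix_word n s = (fst s, map (snd s) [0..<n])"

definition glue_rel :: "('a,'b) pre_digraph \<Rightarrow> ('c,'d) pre_digraph \<Rightarrow> 'c \<Rightarrow> 'c
     \<Rightarrow> (('b \<times> (nat \<Rightarrow> 'd)) \<times> ('b \<times> (nat \<Rightarrow> 'd))) set" where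
  "glue_rel G0 R v w = {(s, t). s \<in> topspace (symbol_top G0 R) \<and> t \<in> topspace (symbol_top G0 R) \<and>
      (\<forall>n. \<exists>u. incident G0 R v w (prefix_word n s) u \<and> incident G0 R v w (prefix_word n t) u)}"

definition quotient_top :: "'x topology \<Rightarrow> ('x \<times> 'x) set \<Rightarrow> 'x set topology" where
  "quotient_top T r = topology (\<lambda>U. U \<subseteq> topspace T // r \<and>
        openin T {x \<in> topspace T. r `` {x} \<in> U})"

lemma istopology_quotient:
  "istopology (\<lambda>U. U \<subseteq> topspace T // r \<and> openin T {x \<in> topspace T. r `` {x} \<in> U})"
proof -
  have i: "{x \<in> topspace T. r `` {x} \<in> S \<inter> U} =
      {x \<in> topspace T. r `` {x} \<in> S} \<inter> {x \<in> topspace T. r `` {x} \<in> U}" for S U by auto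
  have u: "{x \<in> topspace T. r `` {x} \<in> \<Union>K} = (\<Union>U\<in>K. {x \<in> topspace T. r `` {x} \<in> U})" for K by auto
  have A: "openin T {x \<in> topspace T. r `` {x} \<in> S \<inter> U}"
    if "openin T {x \<in> topspace T. r `` {x} \<in> S}" "openin T {x \<in> topspace T. r `` {x} \<in> U}" for S U
    unfolding i using that by (rule openin_Int)
  have B: "openin T {x \<in> topspace T. r `` {x} \<in> \<Union>K}"
    if "\<forall>U\<in>K. openin T {x \<in> topspace T. r `` {x} \<in> U}" for K
    unfolding u using that by (intro openin_Union) auto
  show ?thesis unfolding istopology_def
    using A B by (intro conjI allI impI; blast)
qed

definition limit_top :: "('a,'b) pre_digraph \<Rightarrow> ('c,'d) pre_digraph \<Rightarrow> 'c \<Rightarrow> 'c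
     \<Rightarrow> ('b \<times> (nat \<Rightarrow> 'd)) set topology" where
  "limit_top G0 R v w = quotient_top (symbol_top G0 R) (glue_rel G0 R v w)"

definition limit_space :: "('a,'b) pre_digraph \<Rightarrow> ('c,'d) pre_digraph \<Rightarrow> 'c \<Rightarrow> 'c
     \<Rightarrow> ('b \<times> (nat \<Rightarrow> 'd)) set set" where
  "limit_space G0 R v w = topspace (symbol_top G0 R) // glue_rel G0 R v w"

definition qmap :: "('a,'b) pre_digraph \<Rightarrow> ('c,'d) pre_digraph \<Rightarrow> 'c \<Rightarrow> 'c
     \<Rightarrow> 'b \<times> (nat \<Rightarrow> 'd) \<Rightarrow> ('b \<times> (nat \<Rightarrow> 'd)) set" where
  "qmap G0 R v w s = glue_rel G0 R v w `` {s}"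

definition cylinder :: "('a,'b) pre_digraph \<Rightarrow> ('c,'d) pre_digraph \<Rightarrow> ('b,'d) eword
     \<Rightarrow> ('b \<times> (nat \<Rightarrow> 'd)) set" where
  "cylinder G0 R x = {s \<in> topspace (symbol_top G0 R). prefix_word (length (snd x)) s = x}"

definition cell :: "('a,'b) pre_digraph \<Rightarrow> ('c,'d) pre_digraph \<Rightarrow> 'c \<Rightarrow> 'c \<Rightarrow> ('b,'d) eword
     \<Rightarrow> ('b \<times> (nat \<Rightarrow> 'd)) set set" where
  "cell G0 R v w x = qmap G0 R v w ` cylinder G0 R x"

text \<open>The point of X corresponding to a vertex u of some G_n.\<close>
definition vertex_point :: "('a,'b) pre_digraph \<Rightarrow> ('c,'d) pre_digraph \<Rightarrow> 'c \<Rightarrow> 'c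
     \<Rightarrow> ('a,'b,'c,'d) evert \<Rightarrow> ('b \<times> (nat \<Rightarrow> 'd)) set set" where
  "vertex_point G0 R v w u = {qmap G0 R v w s | s. s \<in> topspace (symbol_top G0 R) \<and>
        eventually (\<lambda>k. incident G0 R v w (prefix_word k s) u) sequentially}"

definition cell_boundary :: "('a,'b) pre_digraph \<Rightarrow> ('c,'d) pre_digraph \<Rightarrow> 'c \<Rightarrow> 'c \<Rightarrow> ('b,'d) eword
     \<Rightarrow> ('b \<times> (nat \<Rightarrow> 'd)) set set" where
  "cell_boundary G0 R v w x = vertex_point G0 R v w (fst (ends G0 R v w x)) \<union>
                              vertex_point G0 R v w (snd (ends G0 R v w x))"

definition cell_interior :: "('a,'b) pre_digraph \<Rightarrow> ('c,'d) pre_digraph \<Rightarrow> 'c \<Rightarrow> 'c \<Rightarrow> ('b,'d) eword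
     \<Rightarrow> ('b \<times> (nat \<Rightarrow> 'd)) set set" where
  "cell_interior G0 R v w x = cell G0 R v w x - cell_boundary G0 R v w x"

text \<open>A cellular partition, given by the finite set of edges (of various G_n) whose cells form it.\<close>
definition cellular_partition :: "('a,'b) pre_digraph \<Rightarrow> ('c,'d) pre_digraph \<Rightarrow> 'c \<Rightarrow> 'c
     \<Rightarrow> ('b,'d) eword set \<Rightarrow> bool" where
  "cellular_partition G0 R v w P \<longleftrightarrow> finite P \<and>
     (\<forall>x\<in>P. \<exists>n. edge_word G0 R n x) \<and>
     (\<Union>x\<in>P. cell G0 R v w x) = limit_space G0 R v w \<and>
     (\<forall>x\<in>P. \<forall>y\<in>P. cell G0 R v w x \<noteq> cell G0 R v w y \<longrightarrow>
         cell_interior G0 R v w x \<inter> cell_interior G0 R v w y = {})"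

text \<open>Replace the prefix x of a sequence s by y: x zeta_1 zeta_2 ... maps to y zeta_1 zeta_2 ...\<close>
definition graft :: "('b,'d) eword \<Rightarrow> ('b,'d) eword \<Rightarrow> 'b \<times> (nat \<Rightarrow> 'd) \<Rightarrow> 'b \<times> (nat \<Rightarrow> 'd)" where
  "graft x y s = (fst y, \<lambda>i. if i < length (snd y) then snd y ! i
                             else snd s (i - length (snd y) + length (snd x)))"

text \<open>Rearrangements; as maps X \<rightarrow> X they are normalised to be extensional on X.\<close>
definition rearrangement :: "('a,'b) pre_digraph \<Rightarrow> ('c,'d) pre_digraph \<Rightarrow> 'c \<Rightarrow> 'c
     \<Rightarrow> (('b \<times> (nat \<Rightarrow> 'd)) set \<Rightarrow> ('b \<times> (nat \<Rightarrow> 'd)) set) \<Rightarrow> bool" where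
  "rearrangement G0 R v w f \<longleftrightarrow>
     f \<in> extensional (limit_space G0 R v w) \<and>
     homeomorphic_map (limit_top G0 R v w) (limit_top G0 R v w) f \<and>
     (\<exists>P. cellular_partition G0 R v w P \<and>
        (\<forall>x\<in>P. \<exists>y. (\<exists>m. edge_word G0 R m y) \<and>
              (is_loop_word G0 R v w x \<longleftrightarrow> is_loop_word G0 R v w y) \<and>
              (\<forall>s\<in>cylinder G0 R x. f (qmap G0 R v w s) = qmap G0 R v w (graft x y s))))"

definition rearrangements :: "('a,'b) pre_digraph \<Rightarrow> ('c,'d) pre_digraph \<Rightarrow> 'c \<Rightarrow> 'c
     \<Rightarrow> (('b \<times> (nat \<Rightarrow> 'd)) set \<Rightarrow> ('b \<times> (nat \<Rightarrow> 'd)) set) set" where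
  "rearrangements G0 R v w = {f. rearrangement G0 R v w f}"

end

theory Submission
  imports Defs
begin

text \<open>Canonical maps are compatible with subdivision: if f maps C(x) canonically onto C(y), it
  maps C(x z) canonically onto C(y z) for every word z. Moreover, the cylinders of the cells of any
  cellular partition cover the whole symbol space: a sequence outside all of them could descend into
  an edge sharing no vertex with its parent, yet it is glued to a point of some cell whose word is
  incomparable with its own, which forces it to stay at an old vertex forever. Hence a homeomorphism
  is a rearrangement iff it acts canonically on every edge of G_N for some N, the edges of G_N
  forming a cellular partition. In this normal form closure under composition follows by refining
  the first map until its image edges are deep enough for the second, and closure under inversion
  by inverting the canonical pieces on the image cells, which cover X because the map is onto.\<close>

definition endpoints :: "('a,'b) pre_digraph \<Rightarrow> ('c,'d) pre_digraph \<Rightarrow> 'c \<Rightarrow> 'c \<Rightarrow> ('b,'d) eword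
     \<Rightarrow> ('a,'b,'c,'d) evert set" where
  "endpoints G0 R v w x = {fst (ends G0 R v w x), snd (ends G0 R v w x)}"

definition prefix_of :: "('b,'d) eword \<Rightarrow> ('b,'d) eword \<Rightarrow> bool" where
  "prefix_of x y \<longleftrightarrow> fst x = fst y \<and> (\<exists>m. snd y = snd x @ m)"

text \<open>The vertices of G_N: those of G0 and those created by replacing an edge of depth less than N.\<close>
definition born_before :: "nat \<Rightarrow> ('a,'b,'c,'d) evert \<Rightarrow> bool" where
  "born_before N u \<longleftrightarrow> (\<forall>b l c. u = Inr ((b,l),c) \<longrightarrow> length l < N)"

lemma incident_iff_endpoints: "incident G0 R v w x u \<longleftrightarrow> u \<in> endpoints G0 R v w x"
  by (auto simp: incident_def endpoints_def)

lemma ends_snoc: "ends G0 R v w (b, l @ [z]) =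
  (let conv = (\<lambda>c. if c = v then fst (ends G0 R v w (b,l)) else if c = w then snd (ends G0 R v w (b,l))
             else Inr ((b,l),c)) in (conv (tail R z), conv (head R z)))"
  by (simp add: ends_def split: prod.split)

lemma endpoints_snoc: "u \<in> endpoints G0 R v w (b, l @ [z]) \<Longrightarrow>
   u \<in> endpoints G0 R v w (b,l) \<or> (\<exists>c. u = Inr ((b,l),c))"
  by (auto simp: endpoints_def ends_snoc Let_def split: if_splits)

lemma endpoints_append: "u \<in> endpoints G0 R v w (b, l @ m) \<Longrightarrow>
   u \<in> endpoints G0 R v w (b,l) \<or> (\<exists>m1 m2 c. m = m1 @ m2 \<and> m2 \<noteq> [] \<and> u = Inr ((b, l @ m1), c))"
proof (induction m arbitrary: u rule: rev_induct)
  case Nil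
  then show ?case by simp
next
  case (snoc z m)
  from endpoints_snoc[of u G0 R v w b "l @ m" z] snoc.prems
  consider "u \<in> endpoints G0 R v w (b, l @ m)" | c where "u = Inr ((b, l @ m), c)" by auto
  then show ?case
  proof cases
    case 1
    from snoc.IH[OF this] show ?thesis by (metis append.assoc snoc_eq_iff_butlast)
  next
    case 2
    then show ?thesis by blast
  qed
qed

lemma endpoints_cases: "u \<in> endpoints G0 R v w (b, l) \<Longrightarrow>
   (\<exists>a. u = Inl a) \<or> (\<exists>m1 m2 c. l = m1 @ m2 \<and> m2 \<noteq> [] \<and> u = Inr ((b, m1), c))"
  using endpoints_append[of u G0 R v w b "[]" l] by (auto simp: endpoints_def ends_def)

lemma endpoints_Inr_shorter:
  "Inr ((b',l'),c) \<in> endpoints G0 R v w (b, l) \<Longrightarrow> length l' < length l"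
  by (drule endpoints_cases) auto

lemma endpoints_born_before: "u \<in> endpoints G0 R v w x \<Longrightarrow> born_before (length (snd x)) u"
  by (cases x) (auto simp: born_before_def dest: endpoints_Inr_shorter)

lemma common_endpoint_incomparable:
  assumes "\<not> prefix_of x x'" "\<not> prefix_of x' x"
    and "u \<in> endpoints G0 R v w (fst x, snd x @ m)" "u \<in> endpoints G0 R v w (fst x', snd x' @ m')"
  shows "u \<in> endpoints G0 R v w x"
proof (rule ccontr)
  assume u_new: "u \<notin> endpoints G0 R v w x"
  then obtain m1 c where u: "u = Inr ((fst x, snd x @ m1), c)"
    using endpoints_append[of u G0 R v w "fst x" "snd x" m] assms(3) by auto
  show False
  proof (cases "u \<in> endpoints G0 R v w x'")
    case True
    then have "prefix_of x x'"
      using endpoints_cases[of u G0 R v w "fst x'" "snd x'"] u by (auto simp: prefix_of_def)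
    then show False using assms(1) by simp
  next
    case False
    then obtain m1' c' where "u = Inr ((fst x', snd x' @ m1'), c')"
      using endpoints_append[of u G0 R v w "fst x'" "snd x'" m'] assms(4) by auto
    then have "fst x = fst x'" "snd x @ m1 = snd x' @ m1'" using u by auto
    then have "prefix_of x x' \<or> prefix_of x' x" unfolding prefix_of_def by (metis append_eq_append_conv2)
    then show False using assms(1,2) by blast
  qed
qed

lemma topspace_symbol_top:
  "topspace (symbol_top G0 R) = {s. fst s \<in> arcs G0 \<and> (\<forall>i. snd s i \<in> arcs R)}"
  unfolding symbol_top_def by (auto simp: PiE_iff)

lemma prefix_word_length [simp]: "length (snd (prefix_word n s)) = n"
  by (simp add: prefix_word_def)

lemma prefix_word_fst [simp]: "fst (prefix_word n s) = fst s"
  by (simp add: prefix_word_def)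

lemma prefix_word_Suc: "prefix_word (Suc n) s = (fst s, snd (prefix_word n s) @ [snd s n])"
  by (simp add: prefix_word_def)

lemma prefix_word_add:
  "prefix_word (n + k) s = (fst s, snd (prefix_word n s) @ map (snd s) [n..<n+k])"
  by (simp add: prefix_word_def upt_add_eq_append[of 0 n k])

lemma prefix_word_eq_iff: "prefix_word (length (snd x)) s = x \<longleftrightarrow>
    fst s = fst x \<and> (\<forall>j<length (snd x). snd s j = snd x ! j)"
proof (cases x)
  case (Pair b l)
  have "map (snd s) [0..<length l] = l \<longleftrightarrow> (\<forall>j<length l. snd s j = l ! j)"
    by (metis (mono_tags, lifting) diff_zero length_map length_upt nth_equalityI nth_map_upt add_0)
  then show ?thesis by (simp add: prefix_word_def Pair)
qed

lemma cylinder_iff: "s \<in> cylinder G0 R x \<longleftrightarrow> s \<in> topspace (symbol_top G0 R) \<and>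
    fst s = fst x \<and> (\<forall>j<length (snd x). snd s j = snd x ! j)"
  unfolding cylinder_def using prefix_word_eq_iff by blast

lemma cylinder_subset_topspace: "cylinder G0 R x \<subseteq> topspace (symbol_top G0 R)"
  by (auto simp: cylinder_def)

lemma prefix_word_cylinder: "s \<in> cylinder G0 R x \<Longrightarrow> prefix_word (length (snd x)) s = x"
  by (simp add: cylinder_def)

lemma cylinder_prefix_word: "s \<in> topspace (symbol_top G0 R) \<Longrightarrow> s \<in> cylinder G0 R (prefix_word n s)"
  by (simp add: cylinder_def)

lemma edge_word_prefix_word: "s \<in> topspace (symbol_top G0 R) \<Longrightarrow> edge_word G0 R n (prefix_word n s)"
  by (auto simp: edge_word_def topspace_symbol_top prefix_word_def)

lemma cylinder_append_subset: "cylinder G0 R (fst x, snd x @ m) \<subseteq> cylinder G0 R x"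
  by (auto simp: cylinder_iff nth_append)

lemma cylinder_nonempty:
  assumes "edge_word G0 R n x" "z \<in> arcs R"
  shows "cylinder G0 R x \<noteq> {}"
proof -
  have "(fst x, \<lambda>i. if i < n then snd x ! i else z) \<in> cylinder G0 R x"
    using assms by (auto simp: cylinder_iff topspace_symbol_top edge_word_def)
  then show ?thesis by blast
qed

lemma extends_if_cylinders_meet:
  assumes "s \<in> cylinder G0 R x" "s \<in> cylinder G0 R q" "length (snd x) \<le> length (snd q)"
  shows "q = (fst x, snd x @ drop (length (snd x)) (snd q))"
proof -
  have "take (length (snd x)) (snd q) = snd x"
    using assms by (auto simp: cylinder_iff intro!: nth_equalityI)
  moreover have "fst q = fst x" using assms by (simp add: cylinder_iff)
  ultimately show ?thesis by (metis append_take_drop_id prod.collapse)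
qed

lemma prefix_word_extend: "prefix_word (length (snd x)) s = x \<Longrightarrow> length (snd x) \<le> n \<Longrightarrow>
   prefix_word n s = (fst x, snd x @ map (snd s) [length (snd x)..<n])"
  using prefix_word_add[of "length (snd x)" "n - length (snd x)" s] prefix_word_fst[of "length (snd x)" s]
  by simp

lemma incident_prefix_word_Suc:
  assumes "born_before N u" "N \<le> n" "incident G0 R v w (prefix_word (Suc n) s) u"
  shows "incident G0 R v w (prefix_word n s) u"
proof -
  have "u \<in> endpoints G0 R v w (prefix_word n s) \<or> (\<exists>c. u = Inr (prefix_word n s, c))"
    using endpoints_snoc[of u G0 R v w "fst s" "snd (prefix_word n s)" "snd s n"] assms(3)
    by (simp add: incident_iff_endpoints prefix_word_Suc prefix_word_def)
  moreover have "\<not> (\<exists>c. u = Inr (prefix_word n s, c))"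
    using assms(1,2) unfolding born_before_def by (metis prefix_word_length not_le prod.collapse)
  ultimately show ?thesis by (simp add: incident_iff_endpoints)
qed

text \<open>Descending edges only gain newly created vertices, so an old vertex once lost stays lost.\<close>
lemma not_incident_prefix_word_mono:
  assumes "born_before N u" "N \<le> k" "\<not> incident G0 R v w (prefix_word k s) u" "k \<le> n"
  shows "\<not> incident G0 R v w (prefix_word n s) u"
  using assms(4)
proof (induction n rule: dec_induct)
  case base
  then show ?case using assms(3) .
next
  case (step m)
  then show ?case using incident_prefix_word_Suc[OF assms(1), of m G0 R v w s] assms(2) by auto
qed

lemma glued_incomparable_eventually_endpoint:
  assumes "prefix_word (length (snd x)) s = x" "prefix_word (length (snd x')) t = x'"
    and "\<not> prefix_of x x'" "\<not> prefix_of x' x"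
    and "\<forall>n. \<exists>u. incident G0 R v w (prefix_word n s) u \<and> incident G0 R v w (prefix_word n t) u"
  shows "\<exists>a\<in>endpoints G0 R v w x. eventually (\<lambda>n. incident G0 R v w (prefix_word n s) a) sequentially"
proof -
  define K where "K = max (length (snd x)) (length (snd x'))"
  define a1 where "a1 = fst (ends G0 R v w x)"
  define a2 where "a2 = snd (ends G0 R v w x)"
  have one_of_ends: "incident G0 R v w (prefix_word n s) a1 \<or> incident G0 R v w (prefix_word n s) a2"
    if "K \<le> n" for n
  proof -
    obtain u where u: "incident G0 R v w (prefix_word n s) u" "incident G0 R v w (prefix_word n t) u"
      using assms(5) by blast
    have "u \<in> endpoints G0 R v w x"
      using common_endpoint_incomparable[OF assms(3,4)] u that
        prefix_word_extend[OF assms(1), of n] prefix_word_extend[OF assms(2), of n]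
      by (simp add: K_def incident_iff_endpoints)
    then show ?thesis using u by (auto simp: endpoints_def a1_def a2_def incident_iff_endpoints)
  qed
  have born: "born_before (length (snd x)) a1"
    using endpoints_born_before[of a1 G0 R v w x] by (simp add: a1_def endpoints_def)
  show ?thesis
  proof (cases "\<forall>n\<ge>K. incident G0 R v w (prefix_word n s) a1")
    case True
    then show ?thesis by (auto simp: a1_def endpoints_def eventually_sequentially)
  next
    case False
    then obtain k where k: "K \<le> k" "\<not> incident G0 R v w (prefix_word k s) a1" by auto
    have "incident G0 R v w (prefix_word n s) a2" if "k \<le> n" for n
      using not_incident_prefix_word_mono[OF born _ k(2) that] one_of_ends[of n] k(1) that
      by (simp add: K_def)
    then show ?thesis by (auto simp: a2_def endpoints_def eventually_sequentially)
  qed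
qed

lemma Inr_notin_endpoints: "Inr ((b,l),c) \<notin> endpoints G0 R v w (b,l)"
  using endpoints_Inr_shorter[of b l c G0 R v w b l] by auto

lemma expanding_distinct: "expanding G0 R v w \<Longrightarrow> v \<noteq> w"
  by (simp add: expanding_def repl_sys_def)

lemma expanding_finite_arcs:
  "expanding G0 R v w \<Longrightarrow> finite (arcs G0)" "expanding G0 R v w \<Longrightarrow> finite (arcs R)"
  by (simp_all add: expanding_def repl_sys_def fin_digraph.finite_arcs)

lemma expanding_arcs_nonempty: "expanding G0 R v w \<Longrightarrow> arcs R \<noteq> {}"
  by (auto simp: expanding_def)

lemma expanding_interior_vertex:
  assumes "expanding G0 R v w"
  obtains c where "c \<in> verts R" "c \<noteq> v" "c \<noteq> w"
proof -
  have "\<not> verts R \<subseteq> {v, w}"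
  proof
    assume "verts R \<subseteq> {v, w}"
    then have "card (verts R) \<le> card {v, w}" by (intro card_mono) auto
    also have "\<dots> \<le> 2" by (simp add: card_insert_if)
    finally show False using assms by (simp add: expanding_def)
  qed
  then show ?thesis using that by blast
qed

text \<open>Every edge has a descendant sharing no vertex with it: first cross to an interior vertex c
  of the glued copy of R, then move away from the remaining old endpoint, which is possible
  because v and w are not adjacent in R.\<close>
lemma expanding_escape:
  assumes exp: "expanding G0 R v w"
  obtains u where "set u \<subseteq> arcs R" "endpoints G0 R v w (b, l @ u) \<inter> endpoints G0 R v w (b,l) = {}"
proof -
  have ni: "no_isolated R"
    and nvw: "\<not> (\<exists>a\<in>arcs R. (tail R a = v \<and> head R a = w) \<or> (tail R a = w \<and> head R a = v))"
    and vw: "v \<in> verts R" "w \<in> verts R"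
    using exp by (auto simp: expanding_def repl_sys_def)
  have v_ne_w: "v \<noteq> w" using expanding_distinct[OF exp] .
  obtain c where c: "c \<in> verts R" "c \<noteq> v" "c \<noteq> w" using expanding_interior_vertex[OF exp] .
  obtain z1 where z1: "z1 \<in> arcs R" "tail R z1 = c \<or> head R z1 = c"
    using ni c(1) unfolding no_isolated_def by blast
  obtain zv where zv: "zv \<in> arcs R" "tail R zv \<noteq> w" "head R zv \<noteq> w"
    using ni vw(1) nvw v_ne_w unfolding no_isolated_def by metis
  obtain zw where zw: "zw \<in> arcs R" "tail R zw \<noteq> v" "head R zw \<noteq> v"
    using ni vw(2) nvw v_ne_w unfolding no_isolated_def by metis
  define E where "E = endpoints G0 R v w (b,l)"
  define l1 where "l1 = l @ [z1]"
  have old: "Inr ((b,l),d) \<notin> E" for d unfolding E_def by (rule Inr_notin_endpoints)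
  have new: "Inr ((b,l1),d) \<notin> E" for d
    using endpoints_Inr_shorter[of b l1 d G0 R v w b l] by (auto simp: E_def l1_def)
  have step_disjoint: "endpoints G0 R v w (b, l1 @ [z]) \<inter> E = {}"
    if "v \<in> {tail R z, head R z} \<Longrightarrow> fst (ends G0 R v w (b,l1)) \<notin> E"
      "w \<in> {tail R z, head R z} \<Longrightarrow> snd (ends G0 R v w (b,l1)) \<notin> E" for z
    using that new v_ne_w unfolding endpoints_def ends_snoc Let_def by auto
  have "fst (ends G0 R v w (b,l1)) \<notin> E \<or> snd (ends G0 R v w (b,l1)) \<notin> E"
    using z1(2) c old unfolding l1_def ends_snoc Let_def by auto
  then show ?thesis
  proof
    assume "fst (ends G0 R v w (b,l1)) \<notin> E"
    then show ?thesis
      using that[of "[z1,zv]"] step_disjoint[of zv] z1(1) zv by (simp add: l1_def E_def)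
  next
    assume "snd (ends G0 R v w (b,l1)) \<notin> E"
    then show ?thesis
      using that[of "[z1,zw]"] step_disjoint[of zw] z1(1) zw by (simp add: l1_def E_def)
  qed
qed

lemma is_loop_word_snoc:
  assumes "v \<noteq> w"
  shows "is_loop_word G0 R v w (b, l @ [z]) \<longleftrightarrow>
    tail R z = head R z \<or> (is_loop_word G0 R v w (b,l) \<and> tail R z \<in> {v,w} \<and> head R z \<in> {v,w})"
proof -
  have "fst (ends G0 R v w (b,l)) \<noteq> Inr ((b,l),d)" "snd (ends G0 R v w (b,l)) \<noteq> Inr ((b,l),d)" for d
    using Inr_notin_endpoints[of b l d G0 R v w] by (auto simp: endpoints_def)
  then show ?thesis
    unfolding is_loop_word_def ends_snoc Let_def using assms by (auto dest: sym)
qed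

lemma is_loop_word_append_cong:
  assumes "v \<noteq> w" "is_loop_word G0 R v w x \<longleftrightarrow> is_loop_word G0 R v w y"
  shows "is_loop_word G0 R v w (fst x, snd x @ m) \<longleftrightarrow> is_loop_word G0 R v w (fst y, snd y @ m)"
proof (induction m rule: rev_induct)
  case Nil
  then show ?case using assms(2) by simp
next
  case (snoc z m)
  then show ?case
    using is_loop_word_snoc[OF assms(1), of G0 R "fst x" "snd x @ m" z]
      is_loop_word_snoc[OF assms(1), of G0 R "fst y" "snd y @ m" z]
    by simp
qed

lemma graft_in_cylinder:
  "s \<in> cylinder G0 R x \<Longrightarrow> edge_word G0 R m y \<Longrightarrow> graft x y s \<in> cylinder G0 R y"
  by (auto simp: cylinder_iff topspace_symbol_top graft_def edge_word_def)

lemma graft_append: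
  assumes "s \<in> cylinder G0 R (fst x, snd x @ m)"
  shows "graft (fst x, snd x @ m) (fst y, snd y @ m) s = graft x y s"
proof -
  have s: "snd s j = (snd x @ m) ! j" if "j < length (snd x) + length m" for j
    using assms that by (simp add: cylinder_iff)
  have "snd (graft (fst x, snd x @ m) (fst y, snd y @ m) s) i = snd (graft x y s) i" for i
  proof -
    consider "i < length (snd y)" | "length (snd y) \<le> i" "i < length (snd y) + length m"
      | "length (snd y) + length m \<le> i" by linarith
    then show ?thesis
    proof cases
      case 1
      then show ?thesis by (simp add: graft_def nth_append)
    next
      case 2
      define j where "j = i - length (snd y) + length (snd x)"
      have j: "length (snd x) \<le> j" "j < length (snd x) + length m"
          "j - length (snd x) = i - length (snd y)"
        using 2 by (auto simp: j_def)
      have "snd s j = m ! (i - length (snd y))"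
        using s[OF j(2)] j(1,3) by (simp add: nth_append)
      with 2 show ?thesis by (simp add: graft_def nth_append j_def)
    next
      case 3
      then have "i - (length (snd y) + length m) + (length (snd x) + length m)
          = i - length (snd y) + length (snd x)" by simp
      with 3 show ?thesis by (simp add: graft_def nth_append)
    qed
  qed
  then show ?thesis by (simp add: graft_def fun_eq_iff)
qed

lemma graft_graft: "graft y z (graft x y s) = graft x z s"
  by (auto simp: graft_def fun_eq_iff)

lemma graft_self: "s \<in> cylinder G0 R x \<Longrightarrow> graft x x s = s"
  by (cases s) (auto simp: graft_def fun_eq_iff cylinder_iff)

lemma topspace_limit_top: "topspace (limit_top G0 R v w) = limit_space G0 R v w"
proof -
  let ?T = "symbol_top G0 R" and ?r = "glue_rel G0 R v w"
  have open_iff: "openin (limit_top G0 R v w) U \<longleftrightarrow>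
      U \<subseteq> topspace ?T // ?r \<and> openin ?T {x \<in> topspace ?T. ?r `` {x} \<in> U}" for U
    unfolding limit_top_def quotient_top_def by (simp add: istopology_quotient)
  have "{x \<in> topspace ?T. ?r `` {x} \<in> topspace ?T // ?r} = topspace ?T"
    by (auto intro: quotientI)
  then have "openin (limit_top G0 R v w) (topspace ?T // ?r)" using open_iff by simp
  then have "topspace ?T // ?r \<subseteq> topspace (limit_top G0 R v w)" by (rule openin_subset)
  moreover have "topspace (limit_top G0 R v w) \<subseteq> topspace ?T // ?r"
    using open_iff[of "topspace (limit_top G0 R v w)"] by simp
  ultimately show ?thesis unfolding limit_space_def by (rule subset_antisym[rotated])
qed

lemma limit_space_eq_image_qmap: "limit_space G0 R v w = qmap G0 R v w ` topspace (symbol_top G0 R)"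
  by (auto simp: limit_space_def quotient_def qmap_def)

lemma qmap_in_limit_space: "s \<in> cylinder G0 R x \<Longrightarrow> qmap G0 R v w s \<in> limit_space G0 R v w"
  using cylinder_subset_topspace[of G0 R x] by (auto simp: limit_space_eq_image_qmap)

lemma cell_subset_limit_space: "cell G0 R v w x \<subseteq> limit_space G0 R v w"
  unfolding cell_def by (auto intro: qmap_in_limit_space)

lemma qmap_eq_imp_glued:
  assumes "qmap G0 R v w s = qmap G0 R v w t" "t \<in> topspace (symbol_top G0 R)"
  shows "\<forall>n. \<exists>u. incident G0 R v w (prefix_word n s) u \<and> incident G0 R v w (prefix_word n t) u"
proof -
  have "(t, t) \<in> glue_rel G0 R v w" using assms(2) by (auto simp: glue_rel_def incident_def)
  then have "(s, t) \<in> glue_rel G0 R v w" using assms(1) by (metis Image_singleton_iff qmap_def)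
  then show ?thesis by (simp add: glue_rel_def)
qed

lemma not_prefix_of_same_length: "length (snd x) = length (snd y) \<Longrightarrow> x \<noteq> y \<Longrightarrow> \<not> prefix_of x y"
  by (cases x, cases y) (auto simp: prefix_of_def)

lemma incomparable_if_not_in_cylinder:
  assumes "s \<in> cylinder G0 R z" "s \<notin> cylinder G0 R x" "length (snd x) \<le> length (snd z)"
  shows "\<not> prefix_of x z" "\<not> prefix_of z x"
proof -
  show "\<not> prefix_of x z"
  proof
    assume "prefix_of x z"
    then obtain m where "z = (fst x, snd x @ m)" by (auto simp: prefix_of_def prod_eq_iff)
    then show False using assms(1,2) cylinder_append_subset[of G0 R x m] by auto
  qed
  then show "\<not> prefix_of z x"
    using assms(3) by (auto simp: prefix_of_def)
qed

text \<open>If finitely many cells cover X, their cylinders cover the symbol space. Otherwise descend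
  from a sequence outside all cylinders below the depth of all cells and escape from the current
  edge: the new sequence is glued to a point of some cell, whose word is incomparable with the
  current one, so it must stay at an old endpoint forever, contradicting the escape.\<close>
lemma cylinders_cover_if_cells_cover:
  assumes exp: "expanding G0 R v w" and fin: "finite W"
    and cover: "limit_space G0 R v w \<subseteq> (\<Union>x\<in>W. cell G0 R v w x)"
    and s: "s \<in> topspace (symbol_top G0 R)"
  shows "\<exists>x\<in>W. s \<in> cylinder G0 R x"
proof (rule ccontr)
  assume outside: "\<not> ?thesis"
  define N where "N = Max (insert 0 ((\<lambda>x. length (snd x)) ` W))"
  have deep: "length (snd x) \<le> N" if "x \<in> W" for x
    unfolding N_def using fin that by (intro Max_ge) auto
  define z where "z = prefix_word N s"
  obtain u where u: "set u \<subseteq> arcs R"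
      "endpoints G0 R v w (fst z, snd z @ u) \<inter> endpoints G0 R v w z = {}"
    using expanding_escape[OF exp, of "fst z" "snd z"] by auto
  have "edge_word G0 R (N + length u) (fst z, snd z @ u)"
    using edge_word_prefix_word[OF s, of N] u(1) by (auto simp: z_def edge_word_def)
  then obtain t where t: "t \<in> cylinder G0 R (fst z, snd z @ u)"
    using expanding_arcs_nonempty[OF exp] by (metis cylinder_nonempty ex_in_conv)
  have tz: "t \<in> cylinder G0 R z" using t cylinder_append_subset[of G0 R z] by auto
  obtain x t' where x: "x \<in> W" "t' \<in> cylinder G0 R x" "qmap G0 R v w t = qmap G0 R v w t'"
    using cover qmap_in_limit_space[OF t, of v w] by (auto simp: cell_def)
  have "s \<notin> cylinder G0 R x" using outside x(1) by blast
  then have incomparable: "\<not> prefix_of x z" "\<not> prefix_of z x"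
    using incomparable_if_not_in_cylinder[OF cylinder_prefix_word[OF s]] deep[OF x(1)]
    by (simp_all add: z_def)
  have glued: "\<forall>n. \<exists>u. incident G0 R v w (prefix_word n t) u \<and> incident G0 R v w (prefix_word n t') u"
    using qmap_eq_imp_glued[OF x(3)] x(2) cylinder_subset_topspace by blast
  obtain a M where a: "a \<in> endpoints G0 R v w z" "\<forall>n\<ge>M. incident G0 R v w (prefix_word n t) a"
    using glued_incomparable_eventually_endpoint[OF prefix_word_cylinder[OF tz]
        prefix_word_cylinder[OF x(2)] incomparable(2,1) glued]
    by (auto simp: eventually_sequentially)
  have "\<not> incident G0 R v w (prefix_word (N + length u) t) a"
    using u(2) a(1) prefix_word_cylinder[OF t] by (auto simp: incident_iff_endpoints z_def)
  then have "\<not> incident G0 R v w (prefix_word (max M (N + length u)) t) a"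
    using not_incident_prefix_word_mono endpoints_born_before[OF a(1)]
    by (metis max.cobounded2 le_add1 prefix_word_length z_def)
  then show False using a(2) by simp
qed

lemma finite_edge_words:
  assumes "finite (arcs G0)" "finite (arcs R)"
  shows "finite {x. edge_word G0 R N x}"
proof -
  have "{x. edge_word G0 R N x} = arcs G0 \<times> {l. set l \<subseteq> arcs R \<and> length l = N}"
    by (auto simp: edge_word_def)
  then show ?thesis using assms by (simp add: finite_lists_length_eq)
qed

text \<open>A common point of the cells of incomparable words is glued to a sequence that eventually
  stays at a vertex of the first word, so it is a boundary point.\<close>
lemma cell_interiors_disjoint_if_incomparable:
  assumes incomparable: "\<not> prefix_of x y" "\<not> prefix_of y x"
  shows "cell_interior G0 R v w x \<inter> cell_interior G0 R v w y = {}"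
proof (rule ccontr)
  assume "\<not> ?thesis"
  then obtain p where p: "p \<in> cell_interior G0 R v w x" "p \<in> cell_interior G0 R v w y" by blast
  then obtain s t where st: "s \<in> cylinder G0 R x" "t \<in> cylinder G0 R y"
    "p = qmap G0 R v w s" "p = qmap G0 R v w t"
    by (auto simp: cell_interior_def cell_def)
  have glued: "\<forall>n. \<exists>u. incident G0 R v w (prefix_word n s) u \<and> incident G0 R v w (prefix_word n t) u"
    using qmap_eq_imp_glued[of G0 R v w s t] st cylinder_subset_topspace by blast
  obtain a where a: "a \<in> endpoints G0 R v w x"
    "eventually (\<lambda>n. incident G0 R v w (prefix_word n s) a) sequentially"
    using glued_incomparable_eventually_endpoint[OF prefix_word_cylinder[OF st(1)]
        prefix_word_cylinder[OF st(2)] incomparable glued] by blast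
  have "p \<in> vertex_point G0 R v w a"
    unfolding vertex_point_def using a(2) st(1,3) cylinder_subset_topspace by blast
  then have "p \<in> cell_boundary G0 R v w x"
    using a(1) by (auto simp: cell_boundary_def endpoints_def)
  then show False using p(1) by (simp add: cell_interior_def)
qed

lemma cellular_partition_edge_words:
  assumes "finite (arcs G0)" "finite (arcs R)"
  shows "cellular_partition G0 R v w {x. edge_word G0 R N x}"
  unfolding cellular_partition_def
proof (intro conjI ballI impI)
  show "finite {x. edge_word G0 R N x}" using finite_edge_words[OF assms] .
  show "\<exists>n. edge_word G0 R n x" if "x \<in> {x. edge_word G0 R N x}" for x using that by auto
  show "(\<Union>x\<in>{x. edge_word G0 R N x}. cell G0 R v w x) = limit_space G0 R v w"
  proof
    show "limit_space G0 R v w \<subseteq> (\<Union>x\<in>{x. edge_word G0 R N x}. cell G0 R v w x)"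
    proof
      fix p assume "p \<in> limit_space G0 R v w"
      then obtain s where s: "s \<in> topspace (symbol_top G0 R)" "p = qmap G0 R v w s"
        by (auto simp: limit_space_eq_image_qmap)
      then have "p \<in> cell G0 R v w (prefix_word N s)"
        using cylinder_prefix_word[OF s(1)] by (auto simp: cell_def)
      then show "p \<in> (\<Union>x\<in>{x. edge_word G0 R N x}. cell G0 R v w x)"
        using edge_word_prefix_word[OF s(1)] by blast
    qed
  qed (intro UN_least cell_subset_limit_space)
  fix x y assume "x \<in> {x. edge_word G0 R N x}" "y \<in> {x. edge_word G0 R N x}"
    and "cell G0 R v w x \<noteq> cell G0 R v w y"
  then have "length (snd x) = length (snd y)" "x \<noteq> y" by (auto simp: edge_word_def)
  then show "cell_interior G0 R v w x \<inter> cell_interior G0 R v w y = {}"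
    by (metis cell_interiors_disjoint_if_incomparable not_prefix_of_same_length)
qed

lemma homeomorphic_map_inv_into:
  assumes "homeomorphic_map X Y f"
  shows "homeomorphic_map Y X (\<lambda>y\<in>topspace Y. inv_into (topspace X) f y)"
proof -
  obtain g where g: "homeomorphic_maps X Y f g" using assms homeomorphic_map_maps by blast
  then have g_hom: "homeomorphic_map Y X g" and fg: "\<forall>y\<in>topspace Y. f (g y) = y"
    by (simp_all add: homeomorphic_maps_map)
  have inj: "inj_on f (topspace X)" using homeomorphic_imp_injective_map[OF assms] .
  have g_in: "g y \<in> topspace X" if "y \<in> topspace Y" for y
    using homeomorphic_imp_surjective_map[OF g_hom] that by blast
  show ?thesis
    by (rule homeomorphic_map_eq[OF g_hom]) (use inv_into_f_eq[OF inj g_in] fg in auto)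
qed

text \<open>f restricts to the canonical homeomorphism from the cell of x onto the cell of y.\<close>
definition canonical_on :: "('a,'b) pre_digraph \<Rightarrow> ('c,'d) pre_digraph \<Rightarrow> 'c \<Rightarrow> 'c
     \<Rightarrow> (('b \<times> (nat \<Rightarrow> 'd)) set \<Rightarrow> ('b \<times> (nat \<Rightarrow> 'd)) set) \<Rightarrow> ('b,'d) eword \<Rightarrow> ('b,'d) eword \<Rightarrow> bool"
  where
  "canonical_on G0 R v w f x y \<longleftrightarrow> (is_loop_word G0 R v w x \<longleftrightarrow> is_loop_word G0 R v w y) \<and>
     (\<forall>s\<in>cylinder G0 R x. f (qmap G0 R v w s) = qmap G0 R v w (graft x y s))"

definition canonical_at_depth :: "('a,'b) pre_digraph \<Rightarrow> ('c,'d) pre_digraph \<Rightarrow> 'c \<Rightarrow> 'c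
     \<Rightarrow> (('b \<times> (nat \<Rightarrow> 'd)) set \<Rightarrow> ('b \<times> (nat \<Rightarrow> 'd)) set) \<Rightarrow> nat \<Rightarrow> bool" where
  "canonical_at_depth G0 R v w f N \<longleftrightarrow>
     (\<forall>x. edge_word G0 R N x \<longrightarrow> (\<exists>m y. edge_word G0 R m y \<and> canonical_on G0 R v w f x y))"

lemma edge_word_append:
  "edge_word G0 R m y \<Longrightarrow> set l \<subseteq> arcs R \<Longrightarrow> edge_word G0 R (m + length l) (fst y, snd y @ l)"
  by (auto simp: edge_word_def)

lemma edge_word_take_drop:
  assumes "edge_word G0 R N x" "n \<le> N"
  shows "edge_word G0 R n (fst x, take n (snd x))" "set (drop n (snd x)) \<subseteq> arcs R"
    "length (drop n (snd x)) = N - n"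
  using assms by (auto simp: edge_word_def dest: in_set_takeD in_set_dropD)

lemma canonical_on_append:
  assumes "v \<noteq> w" "canonical_on G0 R v w f x y"
  shows "canonical_on G0 R v w f (fst x, snd x @ l) (fst y, snd y @ l)"
  unfolding canonical_on_def
proof (intro conjI ballI)
  show "is_loop_word G0 R v w (fst x, snd x @ l) \<longleftrightarrow> is_loop_word G0 R v w (fst y, snd y @ l)"
    using assms by (intro is_loop_word_append_cong) (simp_all add: canonical_on_def)
  fix s assume s: "s \<in> cylinder G0 R (fst x, snd x @ l)"
  then have "f (qmap G0 R v w s) = qmap G0 R v w (graft x y s)"
    using assms(2) cylinder_append_subset by (fastforce simp: canonical_on_def)
  then show "f (qmap G0 R v w s) = qmap G0 R v w (graft (fst x, snd x @ l) (fst y, snd y @ l) s)"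
    by (simp add: graft_append[OF s])
qed

lemma canonical_on_restrict_id: "canonical_on G0 R v w (\<lambda>p\<in>limit_space G0 R v w. p) x x"
  by (simp add: canonical_on_def graft_self qmap_in_limit_space)

lemma canonical_on_compose:
  assumes f: "canonical_on G0 R v w f x y" and g: "canonical_on G0 R v w g y z"
    and y: "edge_word G0 R m y" and f_maps: "f ` limit_space G0 R v w \<subseteq> limit_space G0 R v w"
  shows "canonical_on G0 R v w (compose (limit_space G0 R v w) g f) x z"
  unfolding canonical_on_def
proof (intro conjI ballI)
  show "is_loop_word G0 R v w x \<longleftrightarrow> is_loop_word G0 R v w z"
    using f g by (simp add: canonical_on_def)
  fix s assume s: "s \<in> cylinder G0 R x"
  have "compose (limit_space G0 R v w) g f (qmap G0 R v w s) = g (f (qmap G0 R v w s))"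
    by (simp add: compose_eq qmap_in_limit_space[OF s])
  also have "\<dots> = g (qmap G0 R v w (graft x y s))" using f s by (simp add: canonical_on_def)
  also have "\<dots> = qmap G0 R v w (graft y z (graft x y s))"
    using g graft_in_cylinder[OF s y] by (simp add: canonical_on_def)
  finally show "compose (limit_space G0 R v w) g f (qmap G0 R v w s) = qmap G0 R v w (graft x z s)"
    by (simp add: graft_graft)
qed

lemma canonical_on_inv_into:
  assumes f: "canonical_on G0 R v w f x y" and x: "edge_word G0 R n x"
    and inj: "inj_on f (limit_space G0 R v w)"
  shows "canonical_on G0 R v w (\<lambda>p\<in>limit_space G0 R v w. inv_into (limit_space G0 R v w) f p) y x"
  unfolding canonical_on_def
proof (intro conjI ballI)
  show "is_loop_word G0 R v w y \<longleftrightarrow> is_loop_word G0 R v w x"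
    using f by (simp add: canonical_on_def)
  fix t assume t: "t \<in> cylinder G0 R y"
  define s where "s = graft y x t"
  have s: "s \<in> cylinder G0 R x" unfolding s_def by (rule graft_in_cylinder[OF t x])
  have "f (qmap G0 R v w s) = qmap G0 R v w (graft x y s)" using f s by (simp add: canonical_on_def)
  also have "\<dots> = qmap G0 R v w t" by (simp add: s_def graft_graft graft_self[OF t])
  finally have "inv_into (limit_space G0 R v w) f (qmap G0 R v w t) = qmap G0 R v w s"
    using inv_into_f_f[OF inj qmap_in_limit_space[OF s]] by simp
  then show "(\<lambda>p\<in>limit_space G0 R v w. inv_into (limit_space G0 R v w) f p) (qmap G0 R v w t)
      = qmap G0 R v w (graft y x t)"
    by (simp add: qmap_in_limit_space[OF t] s_def)
qed

text \<open>By the covering lemma, every edge deeper than all the given ones refines one of them.\<close>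
lemma canonical_at_depth_if_cells_cover:
  assumes exp: "expanding G0 R v w" and fin: "finite W"
    and cover: "limit_space G0 R v w \<subseteq> (\<Union>x\<in>W. cell G0 R v w x)"
    and canonical: "\<forall>x\<in>W. \<exists>m y. edge_word G0 R m y \<and> canonical_on G0 R v w f x y"
  shows "\<exists>N. canonical_at_depth G0 R v w f N"
proof
  define N where "N = Max (insert 0 ((\<lambda>x. length (snd x)) ` W))"
  have deep: "length (snd x) \<le> N" if "x \<in> W" for x
    unfolding N_def using fin that by (intro Max_ge) auto
  show "canonical_at_depth G0 R v w f N"
    unfolding canonical_at_depth_def
  proof (intro allI impI)
    fix q assume q: "edge_word G0 R N q"
    obtain s where s: "s \<in> cylinder G0 R q"
      using cylinder_nonempty[OF q] expanding_arcs_nonempty[OF exp] by blast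
    obtain x where x: "x \<in> W" "s \<in> cylinder G0 R x"
      using cylinders_cover_if_cells_cover[OF exp fin cover] s cylinder_subset_topspace by blast
    define l where "l = drop (length (snd x)) (snd q)"
    have q_eq: "q = (fst x, snd x @ l)"
      unfolding l_def using extends_if_cylinders_meet[OF x(2) s] deep[OF x(1)] q
      by (simp add: edge_word_def)
    have l: "set l \<subseteq> arcs R" using q by (auto simp: l_def edge_word_def dest: in_set_dropD)
    obtain m y where y: "edge_word G0 R m y" "canonical_on G0 R v w f x y"
      using canonical x(1) by blast
    show "\<exists>m y. edge_word G0 R m y \<and> canonical_on G0 R v w f q y"
      using edge_word_append[OF y(1) l] canonical_on_append[OF expanding_distinct[OF exp] y(2)]
      unfolding q_eq by blast
  qed
qed

lemma canonical_at_depth_deeper: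
  assumes "v \<noteq> w" "canonical_at_depth G0 R v w f N0" "N0 \<le> N" "edge_word G0 R N q"
  shows "\<exists>m y. edge_word G0 R m y \<and> N - N0 \<le> m \<and> canonical_on G0 R v w f q y"
proof -
  note q = edge_word_take_drop[OF assms(4,3)]
  obtain m y where y: "edge_word G0 R m y" "canonical_on G0 R v w f (fst q, take N0 (snd q)) y"
    using assms(2) q(1) unfolding canonical_at_depth_def by blast
  have "canonical_on G0 R v w f q (fst y, snd y @ drop N0 (snd q))"
    using canonical_on_append[OF assms(1) y(2), of "drop N0 (snd q)"] by simp
  then show ?thesis using edge_word_append[OF y(1) q(2)] q(3) by (intro exI conjI) auto
qed

lemma rearrangement_iff_canonical_at_depth:
  assumes exp: "expanding G0 R v w"
  shows "rearrangement G0 R v w f \<longleftrightarrow> f \<in> extensional (limit_space G0 R v w) \<and>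
      homeomorphic_map (limit_top G0 R v w) (limit_top G0 R v w) f \<and>
      (\<exists>N. canonical_at_depth G0 R v w f N)"
proof
  assume f: "rearrangement G0 R v w f"
  then obtain P where P: "cellular_partition G0 R v w P"
    and canonical: "\<forall>x\<in>P. \<exists>m y. edge_word G0 R m y \<and> canonical_on G0 R v w f x y"
    unfolding rearrangement_def canonical_on_def by blast
  have "finite P" "limit_space G0 R v w \<subseteq> (\<Union>x\<in>P. cell G0 R v w x)"
    using P unfolding cellular_partition_def by auto
  with f show "f \<in> extensional (limit_space G0 R v w) \<and>
      homeomorphic_map (limit_top G0 R v w) (limit_top G0 R v w) f \<and>
      (\<exists>N. canonical_at_depth G0 R v w f N)"
    using canonical_at_depth_if_cells_cover[OF exp _ _ canonical]
    by (simp add: rearrangement_def)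
next
  assume "f \<in> extensional (limit_space G0 R v w) \<and>
      homeomorphic_map (limit_top G0 R v w) (limit_top G0 R v w) f \<and>
      (\<exists>N. canonical_at_depth G0 R v w f N)"
  then obtain N where "f \<in> extensional (limit_space G0 R v w)"
      "homeomorphic_map (limit_top G0 R v w) (limit_top G0 R v w) f"
      "canonical_at_depth G0 R v w f N" by blast
  then show "rearrangement G0 R v w f"
    using cellular_partition_edge_words[OF expanding_finite_arcs[OF exp], of v w N]
    unfolding rearrangement_def canonical_at_depth_def canonical_on_def by blast
qed

lemma rearrangement_bij_betw:
  "rearrangement G0 R v w f \<Longrightarrow> bij_betw f (limit_space G0 R v w) (limit_space G0 R v w)"
  using homeomorphic_imp_injective_map[of "limit_top G0 R v w" "limit_top G0 R v w" f]
    homeomorphic_imp_surjective_map[of "limit_top G0 R v w" "limit_top G0 R v w" f]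
  by (simp add: rearrangement_def bij_betw_def topspace_limit_top)

lemma rearrangement_restrict_id:
  assumes "expanding G0 R v w"
  shows "rearrangement G0 R v w (\<lambda>p\<in>limit_space G0 R v w. p)"
proof -
  have "homeomorphic_map (limit_top G0 R v w) (limit_top G0 R v w) (\<lambda>p\<in>limit_space G0 R v w. p)"
    by (rule homeomorphic_map_eq[of _ _ id]) (simp_all add: topspace_limit_top)
  moreover have "canonical_at_depth G0 R v w (\<lambda>p\<in>limit_space G0 R v w. p) 0"
    by (auto simp: canonical_at_depth_def intro: canonical_on_restrict_id)
  ultimately show ?thesis by (auto simp: rearrangement_iff_canonical_at_depth[OF assms])
qed

text \<open>Refining f to depth N1 + N2 makes its image edges deep enough for g to be canonical on them.\<close>
lemma rearrangement_compose:
  assumes exp: "expanding G0 R v w"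
    and f: "rearrangement G0 R v w f" and g: "rearrangement G0 R v w g"
  shows "rearrangement G0 R v w (compose (limit_space G0 R v w) g f)"
proof -
  let ?X = "limit_space G0 R v w" and ?L = "limit_top G0 R v w"
  note v_ne_w = expanding_distinct[OF exp]
  obtain N1 N2 where N1: "canonical_at_depth G0 R v w f N1" and N2: "canonical_at_depth G0 R v w g N2"
    using f g by (auto simp: rearrangement_iff_canonical_at_depth[OF exp])
  have f_maps: "f ` ?X \<subseteq> ?X" using rearrangement_bij_betw[OF f] by (simp add: bij_betw_def)
  have "canonical_at_depth G0 R v w (compose ?X g f) (N1 + N2)"
    unfolding canonical_at_depth_def
  proof (intro allI impI)
    fix q assume q: "edge_word G0 R (N1 + N2) q"
    obtain m y where y: "edge_word G0 R m y" "N2 \<le> m" "canonical_on G0 R v w f q y"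
      using canonical_at_depth_deeper[OF v_ne_w N1 _ q] by auto
    obtain m' z where z: "edge_word G0 R m' z" "canonical_on G0 R v w g y z"
      using canonical_at_depth_deeper[OF v_ne_w N2 y(2,1)] by auto
    show "\<exists>m z. edge_word G0 R m z \<and> canonical_on G0 R v w (compose ?X g f) q z"
      using z(1) canonical_on_compose[OF y(3) z(2) y(1) f_maps] by blast
  qed
  moreover have "homeomorphic_map ?L ?L (compose ?X g f)"
  proof (rule homeomorphic_map_eq)
    show "homeomorphic_map ?L ?L (g \<circ> f)"
      using f g homeomorphic_map_compose by (metis rearrangement_def)
  qed (simp add: topspace_limit_top compose_eq)
  ultimately show ?thesis by (auto simp: rearrangement_iff_canonical_at_depth[OF exp])
qed

lemma image_cells_cover:
  assumes onto: "limit_space G0 R v w \<subseteq> f ` limit_space G0 R v w"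
    and Y: "\<forall>q\<in>{q. edge_word G0 R N q}. \<exists>m. edge_word G0 R m (Y q) \<and> canonical_on G0 R v w f q (Y q)"
  shows "limit_space G0 R v w \<subseteq> (\<Union>q\<in>{q. edge_word G0 R N q}. cell G0 R v w (Y q))"
proof
  fix p assume "p \<in> limit_space G0 R v w"
  then obtain s where s: "s \<in> topspace (symbol_top G0 R)" "p = f (qmap G0 R v w s)"
    using onto by (auto simp: limit_space_eq_image_qmap)
  define q where "q = prefix_word N s"
  have q: "edge_word G0 R N q" "s \<in> cylinder G0 R q"
    using edge_word_prefix_word[OF s(1)] cylinder_prefix_word[OF s(1)] by (auto simp: q_def)
  then obtain m where m: "edge_word G0 R m (Y q)" and "canonical_on G0 R v w f q (Y q)"
    using Y by blast
  then have "p = qmap G0 R v w (graft q (Y q) s)" using q(2) s(2) by (simp add: canonical_on_def)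
  then have "p \<in> cell G0 R v w (Y q)" using graft_in_cylinder[OF q(2) m] by (simp add: cell_def)
  then show "p \<in> (\<Union>q\<in>{q. edge_word G0 R N q}. cell G0 R v w (Y q))" using q(1) by blast
qed

text \<open>The inverse is canonical on the finitely many image cells of a depth at which f is
  canonical; these cover X because f is onto.\<close>
lemma rearrangement_inv_into:
  assumes exp: "expanding G0 R v w" and f: "rearrangement G0 R v w f"
  shows "rearrangement G0 R v w (\<lambda>p\<in>limit_space G0 R v w. inv_into (limit_space G0 R v w) f p)"
proof -
  let ?X = "limit_space G0 R v w" and ?L = "limit_top G0 R v w"
  let ?g = "\<lambda>p\<in>?X. inv_into ?X f p"
  have bij: "bij_betw f ?X ?X" by (rule rearrangement_bij_betw[OF f])
  obtain N where N: "canonical_at_depth G0 R v w f N"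
    using f by (auto simp: rearrangement_iff_canonical_at_depth[OF exp])
  define Q where "Q = {q. edge_word G0 R N q}"
  obtain Y where Y: "\<forall>q\<in>Q. \<exists>m. edge_word G0 R m (Y q) \<and> canonical_on G0 R v w f q (Y q)"
    using N bchoice[of Q "\<lambda>q y. \<exists>m. edge_word G0 R m y \<and> canonical_on G0 R v w f q y"]
    unfolding canonical_at_depth_def Q_def by blast
  have "?X \<subseteq> (\<Union>q\<in>Q. cell G0 R v w (Y q))"
    using image_cells_cover[OF _ Y[unfolded Q_def]] bij by (simp add: bij_betw_def Q_def)
  then have cover: "?X \<subseteq> (\<Union>y\<in>Y ` Q. cell G0 R v w y)" by simp
  have "finite (Y ` Q)" using finite_edge_words[OF expanding_finite_arcs[OF exp]] by (simp add: Q_def)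
  moreover have "\<forall>y\<in>Y ` Q. \<exists>m x. edge_word G0 R m x \<and> canonical_on G0 R v w ?g y x"
  proof
    fix y assume "y \<in> Y ` Q"
    then obtain q where q: "q \<in> Q" "y = Y q" by blast
    have "canonical_on G0 R v w f q y" using Y q by blast
    then have "canonical_on G0 R v w ?g y q"
      using canonical_on_inv_into[OF _ _ bij_betw_imp_inj_on[OF bij]] q(1) by (simp add: Q_def)
    then show "\<exists>m x. edge_word G0 R m x \<and> canonical_on G0 R v w ?g y x"
      using q(1) unfolding Q_def by blast
  qed
  ultimately have "\<exists>M. canonical_at_depth G0 R v w ?g M"
    by (rule canonical_at_depth_if_cells_cover[OF exp _ cover])
  moreover have "homeomorphic_map ?L ?L ?g"
    using homeomorphic_map_inv_into[of ?L ?L f] f by (simp add: rearrangement_def topspace_limit_top)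
  ultimately show ?thesis by (simp add: rearrangement_iff_canonical_at_depth[OF exp])
qed

theorem proposition1p15:
  fixes G0 :: "('a,'b) pre_digraph" and R :: "('c,'d) pre_digraph" and v w :: 'c
  assumes "expanding G0 R v w"
  shows "group \<lparr>carrier = rearrangements G0 R v w,
                monoid.mult = compose (limit_space G0 R v w),
                one = (\<lambda>p\<in>limit_space G0 R v w. p)\<rparr>"
proof (rule groupI; simp add: rearrangements_def)
  let ?X = "limit_space G0 R v w"
  have maps: "f \<in> ?X \<rightarrow> ?X" "f \<in> extensional ?X" if "rearrangement G0 R v w f" for f
    using rearrangement_bij_betw[OF that] that by (auto simp: bij_betw_def rearrangement_def)
  show "rearrangement G0 R v w (compose ?X x y)"
    if "rearrangement G0 R v w x" "rearrangement G0 R v w y" for x y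
    using rearrangement_compose[OF assms that(2,1)] .
  show "rearrangement G0 R v w (\<lambda>p\<in>?X. p)" using rearrangement_restrict_id[OF assms] .
  show "compose ?X (compose ?X x y) z = compose ?X x (compose ?X y z)"
    if "rearrangement G0 R v w x" "rearrangement G0 R v w y" "rearrangement G0 R v w z" for x y z
    using compose_assoc maps that by metis
  show "compose ?X (\<lambda>p\<in>?X. p) x = x" if "rearrangement G0 R v w x" for x
    using Id_compose maps[OF that] by blast
  show "\<exists>y. rearrangement G0 R v w y \<and> compose ?X y x = (\<lambda>p\<in>?X. p)"
    if "rearrangement G0 R v w x" for x
    using rearrangement_inv_into[OF assms that] compose_inv_into_id[OF rearrangement_bij_betw[OF that]]
    by blast
qed

end
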